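(* Let $G$ and $H$ be graphs without isolated vertices. If $K_2\times G$ and $K_2\times H$ are isomorphic as graphs, then the neighborhood complexes $N(G)$ and $N(H)$ are isomorphic as simplicial complexes. If moreover $G$ and $H$ are locally finite and stiff, then conversely $N(G)\cong N(H)$ implies $K_2\times G\cong K_2\times H$.
   Context: A graph $G$ is a set $V(G)$ together with a symmetric subset $E(G) \subset V(G)\times V(G)$ (undirected, no multiple edges, loops allowed; graphs may be infinite). For $v \in V(G)$, $N(v)=\{w : (v,w)\in E(G)\}$; $v$ is isolated if $N(v)=\emptyset$. $G$ is locally finite if every $N(v)$ is finite. $G$ is stiff if for vertices $v,w$, $N(v)\subset N(w)$ implies $v=w$. $K_2$ is the graph with $V(K_2)=\{1,2\}$ and edges $(1,2),(2,1)$. The tensor product $G\times H$ has vertex set $V(G)\times V(H)$, with $((x,y),(x',y'))$ an edge iff $(x,x')\in E(G)$ and $(y,y')\in E(H)$. The neighborhood complex $N(G)$ is the abstract simplicial complex whose vertices are the non-isolated vertices of $G$ and whose simplices are the finite subsets contained in $N(v)$ for some vertex $v$. *)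

theory Defs
  imports Main
begin

text \<open>A graph is a pair (V, E) with E a symmetric subset of V \<times> V
  (undirected, loops allowed, possibly infinite).\<close>
type_synonym 'a graph = "'a set \<times> ('a \<times> 'a) set"

definition verts :: "'a graph \<Rightarrow> 'a set" where "verts G = fst G"
definition edges :: "'a graph \<Rightarrow> ('a \<times> 'a) set" where "edges G = snd G"

definition is_graph :: "'a graph \<Rightarrow> bool" where
  "is_graph G \<longleftrightarrow> edges G \<subseteq> verts G \<times> verts G \<and> sym (edges G)"

definition nbhd :: "'a graph \<Rightarrow> 'a \<Rightarrow> 'a set" where
  "nbhd G v = {w. (v, w) \<in> edges G}"

definition isolated :: "'a graph \<Rightarrow> 'a \<Rightarrow> bool" where
  "isolated G v \<longleftrightarrow> nbhd G v = {}"

definition no_isolated :: "'a graph \<Rightarrow> bool" where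
  "no_isolated G \<longleftrightarrow> (\<forall>v\<in>verts G. \<not> isolated G v)"

definition locally_finite :: "'a graph \<Rightarrow> bool" where
  "locally_finite G \<longleftrightarrow> (\<forall>v\<in>verts G. finite (nbhd G v))"

definition stiff :: "'a graph \<Rightarrow> bool" where
  "stiff G \<longleftrightarrow> (\<forall>v\<in>verts G. \<forall>w\<in>verts G. nbhd G v \<subseteq> nbhd G w \<longrightarrow> v = w)"

definition K2 :: "nat graph" where
  "K2 = ({1, 2}, {(1, 2), (2, 1)})"

definition tensor :: "'a graph \<Rightarrow> 'b graph \<Rightarrow> ('a \<times> 'b) graph" where
  "tensor G H = (verts G \<times> verts H,
     {((x, y), (x', y')). (x, x') \<in> edges G \<and> (y, y') \<in> edges H})"

definition graph_iso :: "'a graph \<Rightarrow> 'b graph \<Rightarrow> bool" where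
  "graph_iso G H \<longleftrightarrow> (\<exists>f. bij_betw f (verts G) (verts H) \<and>
     (\<forall>x\<in>verts G. \<forall>y\<in>verts G. (x, y) \<in> edges G \<longleftrightarrow> (f x, f y) \<in> edges H))"

type_synonym 'a complex = "'a set \<times> 'a set set"

definition cverts :: "'a complex \<Rightarrow> 'a set" where "cverts K = fst K"
definition simplices :: "'a complex \<Rightarrow> 'a set set" where "simplices K = snd K"

definition nbhd_complex :: "'a graph \<Rightarrow> 'a complex" where
  "nbhd_complex G = ({v \<in> verts G. \<not> isolated G v},
     {S. finite S \<and> (\<exists>v\<in>verts G. S \<subseteq> nbhd G v)})"

definition complex_iso :: "'a complex \<Rightarrow> 'b complex \<Rightarrow> bool" where
  "complex_iso K L \<longleftrightarrow> (\<exists>f. bij_betw f (cverts K) (cverts L) \<and>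
     (\<forall>S. S \<subseteq> cverts K \<longrightarrow> (S \<in> simplices K \<longleftrightarrow> f ` S \<in> simplices L)))"

end

theory Submission
  imports Defs
begin

text \<open>
  Write X = K2 \<times> G. The neighbourhood of (2, v) in X is {1} \<times> N(v), so N(G) is the complex of
  finite subsets of the layer {1} \<times> V(G) having a common neighbour in X, and each component of
  the relation "having a common neighbour" on X lies inside one layer.

  Let f be an isomorphism K2 \<times> G \<cong> K2 \<times> H. The layer swap \<sigma> of X and its conjugate
  \<tau> = f\<inverse> \<circ> swap \<circ> f are involutive automorphisms. The layer A = {1} \<times> V(G) is a union of
  components which \<sigma> exchanges with its complement, and so is B = f\<inverse>({1} \<times> V(H)) for \<tau>.
  Hence, in every orbit of components under the group generated by \<sigma> and \<tau>, the components in
  A and those in B are equinumerous, both being halves of the orbit; matching them through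
  automorphisms gives a bijection A \<rightarrow> B preserving common neighbours, which followed by f
  yields N(G) \<cong> N(H).

  Conversely, let \<phi> be an isomorphism N(G) \<cong> N(H) of locally finite graphs. Then \<phi> maps each
  finite neighbourhood N(v) into some N(w), and \<phi>\<inverse> maps N(w) into some N(v'); stiffness
  forces v = v' and \<phi>(N(v)) = N(w). The induced map \<psi> : v \<mapsto> w is bijective by stiffness, and
  (1, v) \<mapsto> (1, \<phi> v), (2, v) \<mapsto> (2, \<psi> v) is an isomorphism K2 \<times> G \<cong> K2 \<times> H.
\<close>

section \<open>Halving and matching orbits of two involutions\<close>

lemma card_of_ordIso_half:
  assumes "infinite C" and "A1 \<union> A2 = C" and "bij_betw h A1 A2"
  shows "(card_of A1, card_of C) \<in> ordIso"
proof -
  have "infinite A1"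
    using assms bij_betw_finite finite_Un by metis
  have "(card_of A2, card_of A1) \<in> ordLeq"
    using card_of_ordIsoI[OF assms(3)] ordIso_symmetric ordIso_imp_ordLeq by blast
  with \<open>infinite A1\<close> have "(card_of (A1 <+> A2), card_of A1) \<in> ordIso"
    by (rule card_of_Plus_infinite1)
  then have "(card_of C, card_of A1) \<in> ordLeq"
    using card_of_Un_Plus_ordLeq[of A1 A2] assms(2) ordLeq_ordIso_trans by blast
  moreover have "(card_of A1, card_of C) \<in> ordLeq"
    using card_of_mono1[of A1 C] assms(2) by blast
  ultimately show ?thesis
    using ordIso_iff_ordLeq by blast
qed

lemma ex_bij_betw_halves:
  assumes "A1 \<inter> A2 = {}" and "A1 \<union> A2 = C" and "bij_betw h A1 A2"
    and "B1 \<inter> B2 = {}" and "B1 \<union> B2 = C" and "bij_betw k B1 B2"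
  shows "\<exists>g. bij_betw g A1 B1"
proof (cases "finite C")
  case True
  then have "finite (A1 \<union> A2)" "finite (B1 \<union> B2)"
    using assms(2,5) by simp_all
  then have "finite A1" "finite A2" "finite B1" "finite B2"
    by simp_all
  then have "card A1 + card A2 = card B1 + card B2"
    using card_Un_disjoint[of A1 A2] card_Un_disjoint[of B1 B2] assms(1,2,4,5) by simp
  moreover have "card A1 = card A2" "card B1 = card B2"
    using assms(3,6) bij_betw_same_card by blast+
  ultimately have "card A1 = card B1"
    by simp
  then show ?thesis
    by (rule finite_same_card_bij[OF \<open>finite A1\<close> \<open>finite B1\<close>])
next
  case False
  have "(card_of A1, card_of C) \<in> ordIso" "(card_of B1, card_of C) \<in> ordIso"
    using card_of_ordIso_half[OF False assms(2,3)] card_of_ordIso_half[OF False assms(5,6)] .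
  then have "(card_of A1, card_of B1) \<in> ordIso"
    using ordIso_transitive ordIso_symmetric by metis
  then show ?thesis
    using card_of_ordIso by blast
qed

lemma bij_betw_glue_classes:
  assumes "equiv UNIV E"
    and "\<And>x. x \<in> Q \<union> R \<Longrightarrow> bij_betw (h (E `` {x})) (E `` {x} \<inter> Q) (E `` {x} \<inter> R)"
  shows "bij_betw (\<lambda>q. h (E `` {q}) q) Q R" and "\<forall>q\<in>Q. (q, h (E `` {q}) q) \<in> E"
proof -
  have class_eq: "E `` {y} = E `` {x}" if "(x, y) \<in> E" for x y
    using equiv_class_eq[OF assms(1) that] by (rule sym)
  have self: "(x, x) \<in> E" for x
    using assms(1) by (simp add: equiv_def refl_on_def)
  have maps: "(q, h (E `` {q}) q) \<in> E \<and> h (E `` {q}) q \<in> R" if "q \<in> Q" for q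
  proof -
    have "q \<in> Q \<union> R" "q \<in> E `` {q} \<inter> Q"
      using that self by auto
    then have "h (E `` {q}) q \<in> E `` {q} \<inter> R"
      by (rule bij_betw_apply[OF assms(2)])
    then show ?thesis
      by simp
  qed
  then show "\<forall>q\<in>Q. (q, h (E `` {q}) q) \<in> E"
    by simp
  show "bij_betw (\<lambda>q. h (E `` {q}) q) Q R"
    unfolding bij_betw_def
  proof (intro conjI inj_onI subset_antisym subsetI)
    fix q q' assume q: "q \<in> Q" "q' \<in> Q" and eq: "h (E `` {q}) q = h (E `` {q'}) q'"
    have "E `` {q'} = E `` {h (E `` {q'}) q'}"
      using class_eq[of q'] maps[OF q(2)] by simp
    also have "\<dots> = E `` {h (E `` {q}) q}"
      by (simp only: eq)
    also have "\<dots> = E `` {q}"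
      using class_eq[of q] maps[OF q(1)] by simp
    finally have same: "E `` {q'} = E `` {q}" .
    have "inj_on (h (E `` {q})) (E `` {q} \<inter> Q)"
      using assms(2)[of q] q(1) by (simp add: bij_betw_def)
    moreover have "h (E `` {q}) q = h (E `` {q}) q'"
      using eq same by simp
    moreover have "q \<in> E `` {q} \<inter> Q" "q' \<in> E `` {q'} \<inter> Q"
      using self q by simp_all
    ultimately show "q = q'"
      unfolding same by (rule inj_onD)
  next
    fix r assume "r \<in> (\<lambda>q. h (E `` {q}) q) ` Q"
    then show "r \<in> R"
      using maps by auto
  next
    fix r assume "r \<in> R"
    then have "r \<in> h (E `` {r}) ` (E `` {r} \<inter> Q)"
      using assms(2)[of r] self[of r] by (simp add: bij_betw_def)
    then obtain q where q: "r = h (E `` {r}) q" "q \<in> E `` {r} \<inter> Q"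
      by (rule imageE)
    then have "r = h (E `` {q}) q"
      using class_eq[of r q] by simp
    then show "r \<in> (\<lambda>q. h (E `` {q}) q) ` Q"
      by (rule image_eqI) (use q(2) in simp)
  qed
qed

lemma bij_betw_involution_halves:
  assumes "\<forall>p\<in>C. \<sigma> p \<in> C \<and> \<sigma> (\<sigma> p) = p" and "C \<subseteq> P" and "\<forall>p\<in>P. p \<in> Q \<longleftrightarrow> \<sigma> p \<notin> Q"
  shows "bij_betw \<sigma> (C \<inter> Q) (C - Q)"
proof (rule bij_betw_byWitness[where f' = \<sigma>])
  have "\<sigma> p \<in> C" "p \<in> Q \<longleftrightarrow> \<sigma> p \<notin> Q" if "p \<in> C" for p
    using assms that by blast+
  then show "\<sigma> ` (C \<inter> Q) \<subseteq> C - Q" "\<sigma> ` (C - Q) \<subseteq> C \<inter> Q"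
    by blast+
qed (use assms(1) in simp_all)

lemma involutions_halves_matching:
  assumes \<sigma>: "\<forall>p\<in>P. \<sigma> p \<in> P \<and> \<sigma> (\<sigma> p) = p" and \<tau>: "\<forall>p\<in>P. \<tau> p \<in> P \<and> \<tau> (\<tau> p) = p"
    and Q: "Q \<subseteq> P" "\<forall>p\<in>P. p \<in> Q \<longleftrightarrow> \<sigma> p \<notin> Q"
    and R: "R \<subseteq> P" "\<forall>p\<in>P. p \<in> R \<longleftrightarrow> \<tau> p \<notin> R"
  shows "\<exists>\<Phi>. bij_betw \<Phi> Q R \<and>
    (\<forall>q\<in>Q. (q, \<Phi> q) \<in> ({(p, \<sigma> p) | p. p \<in> P} \<union> {(p, \<tau> p) | p. p \<in> P})\<^sup>*)"
proof -
  \<comment> \<open>Every orbit of \<open>\<sigma>\<close> and \<open>\<tau>\<close> is split in half by \<open>Q\<close> via \<open>\<sigma>\<close> and by \<open>R\<close> via \<open>\<tau>\<close>.\<close>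
  define T where "T = {(p, \<sigma> p) | p. p \<in> P} \<union> {(p, \<tau> p) | p. p \<in> P}"
  have "sym T"
    unfolding T_def sym_def using \<sigma> \<tau> by force
  then have equiv: "equiv UNIV (T\<^sup>*)"
    by (simp add: equiv_def refl_rtrancl sym_rtrancl trans_rtrancl)
  have orbit: "T\<^sup>* `` {x} \<subseteq> P" "\<forall>p\<in>T\<^sup>* `` {x}. \<sigma> p \<in> T\<^sup>* `` {x} \<and> \<sigma> (\<sigma> p) = p"
    "\<forall>p\<in>T\<^sup>* `` {x}. \<tau> p \<in> T\<^sup>* `` {x} \<and> \<tau> (\<tau> p) = p" if "x \<in> P" for x
  proof -
    have "T `` P \<subseteq> P"
      unfolding T_def using \<sigma> \<tau> by auto
    then show "T\<^sup>* `` {x} \<subseteq> P"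
      using Image_closed_trancl[of T P] Image_mono[of "T\<^sup>*" "T\<^sup>*" "{x}" P] that by blast
    moreover have "(p, \<sigma> p) \<in> T" "(p, \<tau> p) \<in> T" if "p \<in> P" for p
      unfolding T_def using that by blast+
    ultimately show "\<forall>p\<in>T\<^sup>* `` {x}. \<sigma> p \<in> T\<^sup>* `` {x} \<and> \<sigma> (\<sigma> p) = p"
      "\<forall>p\<in>T\<^sup>* `` {x}. \<tau> p \<in> T\<^sup>* `` {x} \<and> \<tau> (\<tau> p) = p"
      using \<sigma> \<tau> by (auto intro: rtrancl_into_rtrancl)
  qed
  have class_bij: "\<exists>h. bij_betw h (T\<^sup>* `` {x} \<inter> Q) (T\<^sup>* `` {x} \<inter> R)" if "x \<in> P" for x
  proof (rule ex_bij_betw_halves)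
    show "bij_betw \<sigma> (T\<^sup>* `` {x} \<inter> Q) (T\<^sup>* `` {x} - Q)"
      using orbit(2)[OF that] orbit(1)[OF that] Q(2) by (rule bij_betw_involution_halves)
    show "bij_betw \<tau> (T\<^sup>* `` {x} \<inter> R) (T\<^sup>* `` {x} - R)"
      using orbit(3)[OF that] orbit(1)[OF that] R(2) by (rule bij_betw_involution_halves)
  qed auto
  define h where "h c = (SOME h. bij_betw h (c \<inter> Q) (c \<inter> R))" for c
  have "bij_betw (h (T\<^sup>* `` {x})) (T\<^sup>* `` {x} \<inter> Q) (T\<^sup>* `` {x} \<inter> R)" if "x \<in> Q \<union> R" for x
  proof -
    have "x \<in> P"
      using that Q(1) R(1) by blast
    then show ?thesis
      unfolding h_def by (rule someI_ex[OF class_bij])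
  qed
  from bij_betw_glue_classes[OF equiv this] show ?thesis
    unfolding T_def by blast
qed

section \<open>Graph isomorphisms and common neighbours\<close>

definition has_common_nbr :: "'a graph \<Rightarrow> 'a set \<Rightarrow> bool" where
  "has_common_nbr X S \<longleftrightarrow> (\<exists>z\<in>verts X. S \<subseteq> nbhd X z)"

definition graph_iso_map :: "'a graph \<Rightarrow> 'b graph \<Rightarrow> ('a \<Rightarrow> 'b) \<Rightarrow> bool" where
  "graph_iso_map X Y f \<longleftrightarrow> bij_betw f (verts X) (verts Y) \<and>
     (\<forall>x\<in>verts X. \<forall>y\<in>verts X. (x, y) \<in> edges X \<longleftrightarrow> (f x, f y) \<in> edges Y)"

lemma graph_iso_iff_ex_map: "graph_iso X Y \<longleftrightarrow> (\<exists>f. graph_iso_map X Y f)"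
  unfolding graph_iso_def graph_iso_map_def ..

lemma graph_iso_map_bij: "graph_iso_map X Y f \<Longrightarrow> bij_betw f (verts X) (verts Y)"
  unfolding graph_iso_map_def by simp

lemma graph_iso_map_id: "graph_iso_map X X id"
  unfolding graph_iso_map_def by simp

lemma graph_iso_map_in_verts: "graph_iso_map X Y f \<Longrightarrow> x \<in> verts X \<Longrightarrow> f x \<in> verts Y"
  by (rule bij_betw_apply[OF graph_iso_map_bij])

lemma graph_iso_map_edge_iff:
  "graph_iso_map X Y f \<Longrightarrow> x \<in> verts X \<Longrightarrow> y \<in> verts X \<Longrightarrow> (f x, f y) \<in> edges Y \<longleftrightarrow> (x, y) \<in> edges X"
  unfolding graph_iso_map_def by simp

lemma graph_iso_map_comp:
  assumes "graph_iso_map X Y f" and "graph_iso_map Y Z g"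
  shows "graph_iso_map X Z (g \<circ> f)"
  unfolding graph_iso_map_def
proof (intro conjI ballI)
  show "bij_betw (g \<circ> f) (verts X) (verts Z)"
    using graph_iso_map_bij[OF assms(1)] graph_iso_map_bij[OF assms(2)] by (rule bij_betw_trans)
  fix x y assume "x \<in> verts X" "y \<in> verts X"
  with assms show "(x, y) \<in> edges X \<longleftrightarrow> ((g \<circ> f) x, (g \<circ> f) y) \<in> edges Z"
    by (simp add: graph_iso_map_edge_iff graph_iso_map_in_verts)
qed

lemma graph_iso_map_inv:
  assumes "graph_iso_map X Y f"
  shows "graph_iso_map Y X (inv_into (verts X) f)"
  unfolding graph_iso_map_def
proof (intro conjI ballI)
  have bij: "bij_betw f (verts X) (verts Y)"
    using assms by (rule graph_iso_map_bij)
  then show inv_bij: "bij_betw (inv_into (verts X) f) (verts Y) (verts X)"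
    by (rule bij_betw_inv_into)
  fix x y assume xy: "x \<in> verts Y" "y \<in> verts Y"
  then have "inv_into (verts X) f x \<in> verts X" "inv_into (verts X) f y \<in> verts X"
    using bij_betw_apply[OF inv_bij] by simp_all
  moreover have "f (inv_into (verts X) f x) = x" "f (inv_into (verts X) f y) = y"
    using bij xy by (simp_all add: bij_betw_inv_into_right)
  ultimately show "(x, y) \<in> edges Y \<longleftrightarrow> (inv_into (verts X) f x, inv_into (verts X) f y) \<in> edges X"
    using graph_iso_map_edge_iff[OF assms] by metis
qed

lemma graph_iso_map_has_common_nbr:
  assumes f: "graph_iso_map X Y f" and S: "S \<subseteq> verts X"
  shows "has_common_nbr Y (f ` S) \<longleftrightarrow> has_common_nbr X S"
proof -
  have nbr: "f ` S \<subseteq> nbhd Y (f z) \<longleftrightarrow> S \<subseteq> nbhd X z" if "z \<in> verts X" for z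
  proof -
    have "\<forall>s\<in>S. (f z, f s) \<in> edges Y \<longleftrightarrow> (z, s) \<in> edges X"
      using S that graph_iso_map_edge_iff[OF f] by blast
    then show ?thesis
      unfolding nbhd_def by blast
  qed
  have "f ` verts X = verts Y"
    using graph_iso_map_bij[OF f] by (rule bij_betw_imp_surj_on)
  then have "has_common_nbr Y (f ` S) \<longleftrightarrow> (\<exists>z\<in>f ` verts X. f ` S \<subseteq> nbhd Y z)"
    by (simp add: has_common_nbr_def)
  also have "\<dots> \<longleftrightarrow> (\<exists>z\<in>verts X. f ` S \<subseteq> nbhd Y (f z))"
    by simp
  also have "\<dots> \<longleftrightarrow> has_common_nbr X S"
    unfolding has_common_nbr_def using nbr by auto
  finally show ?thesis .
qed

definition common_nbr_rel :: "'a graph \<Rightarrow> 'a rel" where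
  "common_nbr_rel X = {(x, y). x \<in> verts X \<and> y \<in> verts X \<and> has_common_nbr X {x, y}}"

text \<open>For a non-isolated vertex x this is the vertex set of the connected component of x in
  the neighbourhood complex.\<close>

definition nbhd_component :: "'a graph \<Rightarrow> 'a \<Rightarrow> 'a set" where
  "nbhd_component X x = (common_nbr_rel X)\<^sup>* `` {x}"

lemma nbhd_component_self: "x \<in> nbhd_component X x"
  unfolding nbhd_component_def by blast

lemma nbhd_component_eq:
  assumes "y \<in> nbhd_component X x"
  shows "nbhd_component X y = nbhd_component X x"
proof -
  have "sym (common_nbr_rel X)"
    unfolding common_nbr_rel_def sym_def by (auto simp: insert_commute)
  then have "equiv UNIV ((common_nbr_rel X)\<^sup>*)"
    by (simp add: equiv_def refl_rtrancl sym_rtrancl trans_rtrancl)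
  from equiv_class_eq[OF this] assms show ?thesis
    unfolding nbhd_component_def by simp
qed

lemma nbhd_component_subset_verts:
  assumes "x \<in> verts X"
  shows "nbhd_component X x \<subseteq> verts X"
proof -
  have "common_nbr_rel X `` verts X \<subseteq> verts X"
    unfolding common_nbr_rel_def by blast
  then have "(common_nbr_rel X)\<^sup>* `` verts X = verts X"
    by (rule Image_closed_trancl)
  with assms show ?thesis
    unfolding nbhd_component_def by blast
qed

lemma nbhd_component_subset_iff:
  assumes "common_nbr_rel X `` A \<subseteq> A"
  shows "nbhd_component X x \<subseteq> A \<longleftrightarrow> x \<in> A"
  using Image_closed_trancl[OF assms] nbhd_component_self[of x X]
  unfolding nbhd_component_def by blast

lemma has_common_nbr_subset_nbhd_component:
  assumes "has_common_nbr X S" and "S \<subseteq> verts X" and "x \<in> S"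
  shows "S \<subseteq> nbhd_component X x"
proof
  fix y assume "y \<in> S"
  with assms have "(x, y) \<in> common_nbr_rel X"
    unfolding common_nbr_rel_def has_common_nbr_def by blast
  then show "y \<in> nbhd_component X x"
    unfolding nbhd_component_def by blast
qed

lemma graph_iso_map_common_nbr_rel:
  assumes "graph_iso_map X Y f" and "(x, y) \<in> common_nbr_rel X"
  shows "(f x, f y) \<in> common_nbr_rel Y"
proof -
  have "x \<in> verts X" "y \<in> verts X" "has_common_nbr X {x, y}"
    using assms(2) unfolding common_nbr_rel_def by auto
  then show ?thesis
    using graph_iso_map_has_common_nbr[OF assms(1), of "{x, y}"] graph_iso_map_in_verts[OF assms(1)]
    unfolding common_nbr_rel_def by auto
qed

lemma graph_iso_map_image_nbhd_component_subset:
  assumes "graph_iso_map X Y f"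
  shows "f ` nbhd_component X x \<subseteq> nbhd_component Y (f x)"
proof -
  have "(f x, f y) \<in> (common_nbr_rel Y)\<^sup>*" if "(x, y) \<in> (common_nbr_rel X)\<^sup>*" for y
    using that
  proof (induction rule: rtrancl_induct)
    case (step y z)
    then show ?case
      using graph_iso_map_common_nbr_rel[OF assms] by (blast intro: rtrancl_into_rtrancl)
  qed simp
  then show ?thesis
    unfolding nbhd_component_def by blast
qed

lemma graph_iso_map_image_nbhd_component:
  assumes f: "graph_iso_map X Y f" and x: "x \<in> verts X"
  shows "f ` nbhd_component X x = nbhd_component Y (f x)"
proof
  show "f ` nbhd_component X x \<subseteq> nbhd_component Y (f x)"
    using f by (rule graph_iso_map_image_nbhd_component_subset)
  let ?g = "inv_into (verts X) f"
  have bij: "bij_betw f (verts X) (verts Y)"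
    using f by (rule graph_iso_map_bij)
  have "?g ` nbhd_component Y (f x) \<subseteq> nbhd_component X (?g (f x))"
    using graph_iso_map_inv[OF f] by (rule graph_iso_map_image_nbhd_component_subset)
  also have "?g (f x) = x"
    using bij x by (simp add: bij_betw_inv_into_left)
  finally have "f ` ?g ` nbhd_component Y (f x) \<subseteq> f ` nbhd_component X x"
    by (rule image_mono)
  moreover have "f ` ?g ` nbhd_component Y (f x) = nbhd_component Y (f x)"
    using bij nbhd_component_subset_verts[OF graph_iso_map_in_verts[OF f x]]
    by (simp add: bij_betw_def image_inv_into_cancel)
  ultimately show "nbhd_component Y (f x) \<subseteq> f ` nbhd_component X x"
    by simp
qed

locale component_matching =
  fixes X :: "'a graph" and Q R :: "'a set set"
    and \<Phi> :: "'a set \<Rightarrow> 'a set" and g :: "'a set \<Rightarrow> 'a \<Rightarrow> 'a"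
  assumes components: "Q \<union> R \<subseteq> nbhd_component X ` verts X"
    and bij_\<Phi>: "bij_betw \<Phi> Q R"
    and aut: "\<And>q. q \<in> Q \<Longrightarrow> graph_iso_map X X (g q)"
    and image: "\<And>q. q \<in> Q \<Longrightarrow> g q ` q = \<Phi> q"
begin

definition glued :: "'a \<Rightarrow> 'a" where
  "glued x = g (nbhd_component X x) x"

lemma nbhd_component_of_mem:
  assumes "q \<in> Q \<union> R" and "x \<in> q"
  shows "nbhd_component X x = q"
proof -
  obtain v where "q = nbhd_component X v"
    using assms(1) components by blast
  with assms(2) show ?thesis
    using nbhd_component_eq by simp
qed

lemma subset_verts: "q \<in> Q \<union> R \<Longrightarrow> q \<subseteq> verts X"
  using components nbhd_component_subset_verts by fastforce

lemma glued_mem: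
  assumes "q \<in> Q" and "x \<in> q"
  shows "glued x = g q x" and "glued x \<in> \<Phi> q" and "\<Phi> q \<in> R"
proof -
  show "glued x = g q x"
    unfolding glued_def using nbhd_component_of_mem[of q x] assms by simp
  then show "glued x \<in> \<Phi> q"
    using image[OF assms(1)] assms(2) by blast
  show "\<Phi> q \<in> R"
    using bij_betw_apply[OF bij_\<Phi> assms(1)] .
qed

lemma nbhd_component_glued:
  assumes "q \<in> Q" and "x \<in> q"
  shows "nbhd_component X (glued x) = \<Phi> q"
  using nbhd_component_of_mem[of "\<Phi> q" "glued x"] glued_mem(2,3)[OF assms] by simp

lemma bij_betw_glued: "bij_betw glued (\<Union>Q) (\<Union>R)"
  unfolding bij_betw_def
proof (intro conjI inj_onI subset_antisym subsetI)
  fix x x' assume "x \<in> \<Union>Q" "x' \<in> \<Union>Q" and eq: "glued x = glued x'"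
  then obtain q q' where q: "q \<in> Q" "x \<in> q" and q': "q' \<in> Q" "x' \<in> q'"
    by blast
  have "\<Phi> q = \<Phi> q'"
    using nbhd_component_glued[OF q] nbhd_component_glued[OF q'] eq by simp
  then have "q' = q"
    using bij_betw_imp_inj_on[OF bij_\<Phi>] q(1) q'(1) by (simp add: inj_on_eq_iff)
  then have "g q x = g q x'"
    using eq glued_mem(1) q q' by simp
  moreover have "inj_on (g q) (verts X)"
    using graph_iso_map_bij[OF aut[OF q(1)]] by (rule bij_betw_imp_inj_on)
  moreover have "x \<in> verts X" "x' \<in> verts X"
    using subset_verts q q' \<open>q' = q\<close> by blast+
  ultimately show "x = x'"
    by (simp add: inj_on_eq_iff)
next
  fix y assume "y \<in> glued ` \<Union>Q"
  then show "y \<in> \<Union>R"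
    using glued_mem(2,3) by blast
next
  fix y assume "y \<in> \<Union>R"
  then obtain r where r: "r \<in> R" "y \<in> r"
    by blast
  then obtain q where q: "q \<in> Q" "\<Phi> q = r"
    using bij_\<Phi> by (auto simp: bij_betw_def)
  then obtain x where x: "x \<in> q" "y = g q x"
    using image r(2) by blast
  then have "y = glued x"
    using glued_mem(1)[OF q(1)] by simp
  then show "y \<in> glued ` \<Union>Q"
    using x(1) q(1) by blast
qed

lemma glued_in_verts: "x \<in> \<Union>Q \<Longrightarrow> glued x \<in> verts X"
  using glued_mem(2,3) subset_verts by blast

lemma has_common_nbr_subset_component:
  assumes "has_common_nbr X S" and "S \<subseteq> \<Union>Q" and "q \<in> Q" and "x \<in> S \<inter> q"
  shows "S \<subseteq> q"
proof -
  have "S \<subseteq> verts X"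
    using assms(2) subset_verts by blast
  from has_common_nbr_subset_nbhd_component[OF assms(1) this IntD1[OF assms(4)]]
  show ?thesis
    using nbhd_component_of_mem[of q x] assms(3,4) by simp
qed

lemma has_common_nbr_glued_subset_component:
  assumes "has_common_nbr X (glued ` S)" and "S \<subseteq> \<Union>Q" and "q \<in> Q" and "x \<in> S \<inter> q"
  shows "S \<subseteq> q"
proof
  fix s assume s: "s \<in> S"
  then obtain q' where q': "q' \<in> Q" "s \<in> q'"
    using assms(2) by blast
  have "glued ` S \<subseteq> verts X"
    using assms(2) glued_in_verts by blast
  from has_common_nbr_subset_nbhd_component[OF assms(1) this imageI[OF IntD1[OF assms(4)]]]
  have "glued s \<in> nbhd_component X (glued x)"
    using s by blast
  then have "nbhd_component X (glued s) = nbhd_component X (glued x)"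
    by (rule nbhd_component_eq)
  then have "\<Phi> q' = \<Phi> q"
    using nbhd_component_glued[OF q'] nbhd_component_glued[OF assms(3)] assms(4) by simp
  then have "q' = q"
    using bij_betw_imp_inj_on[OF bij_\<Phi>] q'(1) assms(3) by (simp add: inj_on_eq_iff)
  with q' show "s \<in> q"
    by simp
qed

lemma has_common_nbr_glued:
  assumes S: "S \<subseteq> \<Union>Q"
  shows "has_common_nbr X (glued ` S) \<longleftrightarrow> has_common_nbr X S"
proof (cases "S = {}")
  case False
  then obtain x q where x: "x \<in> S \<inter> q" and q: "q \<in> Q"
    using S by blast
  have glued_S: "glued ` S = g q ` S" if "S \<subseteq> q"
    by (rule image_cong) (use that glued_mem(1)[OF q] in auto)
  have "S \<subseteq> verts X"
    using S subset_verts by blast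
  with aut[OF q] have iso: "has_common_nbr X (g q ` S) \<longleftrightarrow> has_common_nbr X S"
    by (rule graph_iso_map_has_common_nbr)
  show ?thesis
  proof
    assume "has_common_nbr X (glued ` S)"
    moreover from this have "S \<subseteq> q"
      by (rule has_common_nbr_glued_subset_component[OF _ S q x])
    ultimately show "has_common_nbr X S"
      using glued_S iso by simp
  next
    assume "has_common_nbr X S"
    moreover from this have "S \<subseteq> q"
      by (rule has_common_nbr_subset_component[OF _ S q x])
    ultimately show "has_common_nbr X (glued ` S)"
      using glued_S iso by simp
  qed
qed simp

end

lemma Union_nbhd_components_subset:
  assumes "C \<subseteq> verts X" and "common_nbr_rel X `` C \<subseteq> C"
  shows "\<Union>{p \<in> nbhd_component X ` verts X. p \<subseteq> C} = C"
proof (intro subset_antisym subsetI)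
  fix x assume "x \<in> C"
  then have "nbhd_component X x \<in> {p \<in> nbhd_component X ` verts X. p \<subseteq> C}"
    using assms(1) nbhd_component_subset_iff[OF assms(2)] by auto
  then show "x \<in> \<Union>{p \<in> nbhd_component X ` verts X. p \<subseteq> C}"
    using nbhd_component_self by (rule UnionI)
qed auto

lemma nbhd_components_involution:
  assumes h: "graph_iso_map X X h" "\<forall>x\<in>verts X. h (h x) = x"
    and C: "common_nbr_rel X `` C \<subseteq> C" "\<forall>x\<in>verts X. x \<in> C \<longleftrightarrow> h x \<notin> C"
    and p: "p \<in> nbhd_component X ` verts X"
  shows "h ` p \<in> nbhd_component X ` verts X" and "h ` h ` p = p"
    and "p \<subseteq> C \<longleftrightarrow> \<not> h ` p \<subseteq> C"
proof -
  obtain x where x: "x \<in> verts X" "p = nbhd_component X x"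
    using p by blast
  have hx: "h x \<in> verts X"
    using graph_iso_map_in_verts[OF h(1) x(1)] .
  have image: "h ` nbhd_component X x = nbhd_component X (h x)"
    by (rule graph_iso_map_image_nbhd_component[OF h(1) x(1)])
  show "h ` p \<in> nbhd_component X ` verts X"
    unfolding x(2) image using hx by blast
  show "h ` h ` p = p"
    unfolding x(2) image graph_iso_map_image_nbhd_component[OF h(1) hx] using h(2) x(1) by simp
  show "p \<subseteq> C \<longleftrightarrow> \<not> h ` p \<subseteq> C"
    unfolding x(2) image nbhd_component_subset_iff[OF C(1)] by (rule bspec[OF C(2) x(1)])
qed

lemma ex_graph_aut_of_image_orbit:
  assumes "graph_iso_map X X \<sigma>" and "graph_iso_map X X \<tau>"
    and "(p, p') \<in> ({(p, \<sigma> ` p) | p. p \<in> P} \<union> {(p, \<tau> ` p) | p. p \<in> P})\<^sup>*"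
  shows "\<exists>g. graph_iso_map X X g \<and> g ` p = p'"
  using assms(3)
proof (induction rule: rtrancl_induct)
  case base
  show ?case
    using graph_iso_map_id by fastforce
next
  case (step p' p'')
  then obtain g where g: "graph_iso_map X X g" "g ` p = p'"
    by blast
  from step(2) obtain h where h: "h = \<sigma> \<or> h = \<tau>" "p'' = h ` p'"
    by blast
  then have "graph_iso_map X X h"
    using assms(1,2) by blast
  then have "graph_iso_map X X (h \<circ> g)"
    by (rule graph_iso_map_comp[OF g(1)])
  moreover have "(h \<circ> g) ` p = p''"
    unfolding h(2) g(2)[symmetric] by (rule image_comp[symmetric])
  ultimately show ?case
    by blast
qed

lemma ex_bij_has_common_nbr_of_involutions:
  assumes \<sigma>: "graph_iso_map X X \<sigma>" "\<forall>x\<in>verts X. \<sigma> (\<sigma> x) = x"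
    and \<tau>: "graph_iso_map X X \<tau>" "\<forall>x\<in>verts X. \<tau> (\<tau> x) = x"
    and A: "A \<subseteq> verts X" "common_nbr_rel X `` A \<subseteq> A" "\<forall>x\<in>verts X. x \<in> A \<longleftrightarrow> \<sigma> x \<notin> A"
    and B: "B \<subseteq> verts X" "common_nbr_rel X `` B \<subseteq> B" "\<forall>x\<in>verts X. x \<in> B \<longleftrightarrow> \<tau> x \<notin> B"
  shows "\<exists>\<phi>. bij_betw \<phi> A B \<and> (\<forall>S\<subseteq>A. has_common_nbr X (\<phi> ` S) \<longleftrightarrow> has_common_nbr X S)"
proof -
  define P where "P = nbhd_component X ` verts X"
  define Q where "Q = {p \<in> P. p \<subseteq> A}"
  define R where "R = {p \<in> P. p \<subseteq> B}"
  have "\<exists>\<Phi>. bij_betw \<Phi> Q R \<and>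
      (\<forall>q\<in>Q. (q, \<Phi> q) \<in> ({(p, \<sigma> ` p) | p. p \<in> P} \<union> {(p, \<tau> ` p) | p. p \<in> P})\<^sup>*)"
  proof (rule involutions_halves_matching)
    have \<sigma>P: "\<sigma> ` p \<in> P" "\<sigma> ` \<sigma> ` p = p" "p \<subseteq> A \<longleftrightarrow> \<not> \<sigma> ` p \<subseteq> A" if "p \<in> P" for p
      using that unfolding P_def by (rule nbhd_components_involution[OF \<sigma> A(2,3)])+
    then show "\<forall>p\<in>P. \<sigma> ` p \<in> P \<and> \<sigma> ` \<sigma> ` p = p" "\<forall>p\<in>P. p \<in> Q \<longleftrightarrow> \<sigma> ` p \<notin> Q"
      unfolding Q_def by blast+
    have \<tau>P: "\<tau> ` p \<in> P" "\<tau> ` \<tau> ` p = p" "p \<subseteq> B \<longleftrightarrow> \<not> \<tau> ` p \<subseteq> B" if "p \<in> P" for p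
      using that unfolding P_def by (rule nbhd_components_involution[OF \<tau> B(2,3)])+
    then show "\<forall>p\<in>P. \<tau> ` p \<in> P \<and> \<tau> ` \<tau> ` p = p" "\<forall>p\<in>P. p \<in> R \<longleftrightarrow> \<tau> ` p \<notin> R"
      unfolding R_def by blast+
  qed (auto simp: Q_def R_def)
  then obtain \<Phi> where \<Phi>: "bij_betw \<Phi> Q R"
    and "\<forall>q\<in>Q. (q, \<Phi> q) \<in> ({(p, \<sigma> ` p) | p. p \<in> P} \<union> {(p, \<tau> ` p) | p. p \<in> P})\<^sup>*"
    by blast
  then have "\<forall>q\<in>Q. \<exists>g. graph_iso_map X X g \<and> g ` q = \<Phi> q"
    using ex_graph_aut_of_image_orbit[OF \<sigma>(1) \<tau>(1)] by blast
  then obtain g where "\<forall>q\<in>Q. graph_iso_map X X (g q) \<and> g q ` q = \<Phi> q"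
    by (rule bchoice[THEN exE])
  then interpret component_matching X Q R \<Phi> g
    using \<Phi> by unfold_locales (auto simp: P_def Q_def R_def)
  have "\<Union>Q = A" "\<Union>R = B"
    using Union_nbhd_components_subset A(1,2) B(1,2) unfolding Q_def R_def P_def by blast+
  then show ?thesis
    using bij_betw_glued has_common_nbr_glued by metis
qed

section \<open>The tensor product with K2\<close>

lemma verts_tensor_K2: "verts (tensor K2 G) = {1, 2} \<times> verts G"
  by (simp add: tensor_def verts_def K2_def)

lemma edge_tensor_K2_iff:
  "((i, u), (j, v)) \<in> edges (tensor K2 G) \<longleftrightarrow> (i = 1 \<and> j = 2 \<or> i = 2 \<and> j = 1) \<and> (u, v) \<in> edges G"
  by (auto simp: tensor_def edges_def K2_def)

definition K2_swap :: "nat \<times> 'a \<Rightarrow> nat \<times> 'a" where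
  "K2_swap p = (3 - fst p, snd p)"

lemma K2_swap_K2_swap: "p \<in> verts (tensor K2 G) \<Longrightarrow> K2_swap (K2_swap p) = p"
  by (auto simp: verts_tensor_K2 K2_swap_def)

lemma graph_iso_map_K2_swap: "graph_iso_map (tensor K2 G) (tensor K2 G) K2_swap"
  unfolding graph_iso_map_def
proof (intro conjI ballI)
  have "K2_swap ` verts (tensor K2 G) \<subseteq> verts (tensor K2 G)"
    by (auto simp: verts_tensor_K2 K2_swap_def)
  then show "bij_betw K2_swap (verts (tensor K2 G)) (verts (tensor K2 G))"
    using K2_swap_K2_swap by (intro bij_betw_byWitness[where f' = K2_swap]) blast+
  fix x y assume xy: "x \<in> verts (tensor K2 G)" "y \<in> verts (tensor K2 G)"
  obtain i u j v where x: "x = (i, u)" and y: "y = (j, v)"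
    by (cases x, cases y)
  have "i = 1 \<or> i = 2" "j = 1 \<or> j = 2"
    using xy unfolding x y verts_tensor_K2 by auto
  then show "(x, y) \<in> edges (tensor K2 G) \<longleftrightarrow> (K2_swap x, K2_swap y) \<in> edges (tensor K2 G)"
    unfolding x y K2_swap_def by (elim disjE) (simp_all add: edge_tensor_K2_iff)
qed

lemma common_nbr_rel_tensor_K2_fst:
  assumes "(p, q) \<in> common_nbr_rel (tensor K2 G)"
  shows "fst p = fst q"
proof -
  obtain z where "(z, p) \<in> edges (tensor K2 G)" "(z, q) \<in> edges (tensor K2 G)"
    using assms unfolding common_nbr_rel_def has_common_nbr_def nbhd_def by blast
  moreover obtain i u j v k w where "p = (i, u)" "q = (j, v)" "z = (k, w)"
    by (cases p, cases q, cases z)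
  ultimately have "(k = 1 \<and> i = 2 \<or> k = 2 \<and> i = 1) \<and> (k = 1 \<and> j = 2 \<or> k = 2 \<and> j = 1)"
    by (simp add: edge_tensor_K2_iff)
  then have "i = j"
    by (elim conjE disjE) simp_all
  with \<open>p = (i, u)\<close> \<open>q = (j, v)\<close> show ?thesis
    by simp
qed

lemma has_common_nbr_tensor_K2:
  "has_common_nbr (tensor K2 G) ({1} \<times> S) \<longleftrightarrow> has_common_nbr G S"
proof
  assume "has_common_nbr (tensor K2 G) ({1} \<times> S)"
  then obtain i v where iv: "(i, v) \<in> verts (tensor K2 G)" "{1} \<times> S \<subseteq> nbhd (tensor K2 G) (i, v)"
    unfolding has_common_nbr_def by auto
  have "S \<subseteq> nbhd G v"
  proof
    fix s assume "s \<in> S"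
    then have "((i, v), (1, s)) \<in> edges (tensor K2 G)"
      using iv(2) unfolding nbhd_def by blast
    then show "s \<in> nbhd G v"
      unfolding nbhd_def by (simp add: edge_tensor_K2_iff)
  qed
  moreover have "v \<in> verts G"
    using iv(1) unfolding verts_tensor_K2 by blast
  ultimately show "has_common_nbr G S"
    unfolding has_common_nbr_def by blast
next
  assume "has_common_nbr G S"
  then obtain v where v: "v \<in> verts G" "S \<subseteq> nbhd G v"
    unfolding has_common_nbr_def by blast
  have "{1} \<times> S \<subseteq> nbhd (tensor K2 G) (2, v)"
  proof
    fix x assume "x \<in> {1::nat} \<times> S"
    then obtain s where "x = (1, s)" "s \<in> S"
      by blast
    with v(2) show "x \<in> nbhd (tensor K2 G) (2, v)"
      unfolding nbhd_def by (simp add: edge_tensor_K2_iff subset_iff)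
  qed
  moreover have "(2, v) \<in> verts (tensor K2 G)"
    using v(1) unfolding verts_tensor_K2 by blast
  ultimately show "has_common_nbr (tensor K2 G) ({1} \<times> S)"
    unfolding has_common_nbr_def by blast
qed

section \<open>Isomorphisms of neighbourhood complexes\<close>

definition nbhd_complex_iso_map :: "'a graph \<Rightarrow> 'b graph \<Rightarrow> ('a \<Rightarrow> 'b) \<Rightarrow> bool" where
  "nbhd_complex_iso_map G H \<psi> \<longleftrightarrow> bij_betw \<psi> (verts G) (verts H) \<and>
     (\<forall>S\<subseteq>verts G. finite S \<longrightarrow> (has_common_nbr H (\<psi> ` S) \<longleftrightarrow> has_common_nbr G S))"

lemma cverts_nbhd_complex: "no_isolated G \<Longrightarrow> cverts (nbhd_complex G) = verts G"
  unfolding no_isolated_def cverts_def nbhd_complex_def by auto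

lemma simplices_nbhd_complex:
  "S \<in> simplices (nbhd_complex G) \<longleftrightarrow> finite S \<and> has_common_nbr G S"
  unfolding simplices_def nbhd_complex_def has_common_nbr_def by simp

lemma complex_iso_nbhd_complex_iff:
  assumes "no_isolated G" and "no_isolated H"
  shows "complex_iso (nbhd_complex G) (nbhd_complex H) \<longleftrightarrow> (\<exists>\<psi>. nbhd_complex_iso_map G H \<psi>)"
proof -
  have simplices_iff:
    "(\<forall>S. S \<subseteq> verts G \<longrightarrow> (S \<in> simplices (nbhd_complex G) \<longleftrightarrow> \<psi> ` S \<in> simplices (nbhd_complex H)))
      \<longleftrightarrow> (\<forall>S\<subseteq>verts G. finite S \<longrightarrow> (has_common_nbr H (\<psi> ` S) \<longleftrightarrow> has_common_nbr G S))"
    if bij: "bij_betw \<psi> (verts G) (verts H)" for \<psi>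
  proof -
    have "finite (\<psi> ` S) \<longleftrightarrow> finite S" if "S \<subseteq> verts G" for S
      using finite_image_iff[OF inj_on_subset[OF bij_betw_imp_inj_on[OF bij] that]] .
    then show ?thesis
      unfolding simplices_nbhd_complex by blast
  qed
  show ?thesis
    unfolding complex_iso_def nbhd_complex_iso_map_def
      cverts_nbhd_complex[OF assms(1)] cverts_nbhd_complex[OF assms(2)]
  proof (rule iffI; elim exE conjE)
    fix \<psi> assume "bij_betw \<psi> (verts G) (verts H)"
      and "\<forall>S. S \<subseteq> verts G \<longrightarrow> (S \<in> simplices (nbhd_complex G) \<longleftrightarrow> \<psi> ` S \<in> simplices (nbhd_complex H))"
    then show "\<exists>\<psi>. bij_betw \<psi> (verts G) (verts H) \<and>
        (\<forall>S\<subseteq>verts G. finite S \<longrightarrow> (has_common_nbr H (\<psi> ` S) \<longleftrightarrow> has_common_nbr G S))"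
      using simplices_iff by blast
  next
    fix \<psi> assume "bij_betw \<psi> (verts G) (verts H)"
      and "\<forall>S\<subseteq>verts G. finite S \<longrightarrow> (has_common_nbr H (\<psi> ` S) \<longleftrightarrow> has_common_nbr G S)"
    then show "\<exists>\<psi>. bij_betw \<psi> (verts G) (verts H) \<and>
        (\<forall>S. S \<subseteq> verts G \<longrightarrow> (S \<in> simplices (nbhd_complex G) \<longleftrightarrow> \<psi> ` S \<in> simplices (nbhd_complex H)))"
      using simplices_iff by blast
  qed
qed

lemma nbhd_complex_iso_map_inv:
  assumes "nbhd_complex_iso_map G H \<psi>"
  shows "nbhd_complex_iso_map H G (inv_into (verts G) \<psi>)"
  unfolding nbhd_complex_iso_map_def
proof (intro conjI allI impI)
  have bij: "bij_betw \<psi> (verts G) (verts H)"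
    using assms unfolding nbhd_complex_iso_map_def by simp
  then show "bij_betw (inv_into (verts G) \<psi>) (verts H) (verts G)"
    by (rule bij_betw_inv_into)
  fix T assume T: "T \<subseteq> verts H" "finite T"
  have "inv_into (verts G) \<psi> ` T \<subseteq> verts G"
    using T(1) bij_betw_apply[OF bij_betw_inv_into[OF bij]] by blast
  then have "has_common_nbr H (\<psi> ` inv_into (verts G) \<psi> ` T) \<longleftrightarrow> has_common_nbr G (inv_into (verts G) \<psi> ` T)"
    using assms finite_imageI[OF T(2)] unfolding nbhd_complex_iso_map_def by blast
  moreover have "\<psi> ` inv_into (verts G) \<psi> ` T = T"
    using T(1) bij by (simp add: bij_betw_def image_inv_into_cancel)
  ultimately show "has_common_nbr G (inv_into (verts G) \<psi> ` T) \<longleftrightarrow> has_common_nbr H T"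
    by simp
qed

section \<open>From tensor products to neighbourhood complexes\<close>

lemma graph_iso_map_K2_swap_conjugate:
  assumes f: "graph_iso_map (tensor K2 G) (tensor K2 H) f"
  defines "\<tau> \<equiv> inv_into (verts (tensor K2 G)) f \<circ> K2_swap \<circ> f"
  shows "graph_iso_map (tensor K2 G) (tensor K2 G) \<tau>"
    and "\<forall>x\<in>verts (tensor K2 G). f (\<tau> x) = K2_swap (f x)"
    and "\<forall>x\<in>verts (tensor K2 G). \<tau> (\<tau> x) = x"
proof -
  let ?f' = "inv_into (verts (tensor K2 G)) f"
  show "graph_iso_map (tensor K2 G) (tensor K2 G) \<tau>"
    unfolding \<tau>_def
    using graph_iso_map_comp[OF f graph_iso_map_comp[OF graph_iso_map_K2_swap graph_iso_map_inv[OF f]]] .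
  have f_\<tau>: "f (\<tau> x) = K2_swap (f x)" if "x \<in> verts (tensor K2 G)" for x
  proof -
    have "K2_swap (f x) \<in> verts (tensor K2 H)"
      using graph_iso_map_in_verts[OF graph_iso_map_K2_swap graph_iso_map_in_verts[OF f that]] .
    then show ?thesis
      unfolding \<tau>_def using bij_betw_inv_into_right[OF graph_iso_map_bij[OF f]] by simp
  qed
  then show "\<forall>x\<in>verts (tensor K2 G). f (\<tau> x) = K2_swap (f x)"
    by blast
  show "\<forall>x\<in>verts (tensor K2 G). \<tau> (\<tau> x) = x"
  proof
    fix x assume x: "x \<in> verts (tensor K2 G)"
    have "\<tau> (\<tau> x) = ?f' (K2_swap (K2_swap (f x)))"
      using f_\<tau>[OF x] by (simp add: \<tau>_def)
    also have "\<dots> = x"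
      using K2_swap_K2_swap[OF graph_iso_map_in_verts[OF f x]]
        bij_betw_inv_into_left[OF graph_iso_map_bij[OF f] x] by simp
    finally show "\<tau> (\<tau> x) = x" .
  qed
qed

lemma common_nbr_rel_Image_first_layer:
  assumes f: "graph_iso_map (tensor K2 G) (tensor K2 H) f"
  shows "common_nbr_rel (tensor K2 G) `` {x \<in> verts (tensor K2 G). fst (f x) = 1}
    \<subseteq> {x \<in> verts (tensor K2 G). fst (f x) = 1}"
proof
  fix y assume "y \<in> common_nbr_rel (tensor K2 G) `` {x \<in> verts (tensor K2 G). fst (f x) = 1}"
  then obtain x where "fst (f x) = 1" "(x, y) \<in> common_nbr_rel (tensor K2 G)"
    by blast
  moreover from this(2) have "y \<in> verts (tensor K2 G)" "fst (f x) = fst (f y)"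
    using common_nbr_rel_tensor_K2_fst[OF graph_iso_map_common_nbr_rel[OF f]]
    unfolding common_nbr_rel_def by blast+
  ultimately show "y \<in> {x \<in> verts (tensor K2 G). fst (f x) = 1}"
    by simp
qed

lemma first_layer_swap:
  assumes f: "graph_iso_map (tensor K2 G) (tensor K2 H) f"
    and \<tau>: "graph_iso_map (tensor K2 G) (tensor K2 G) \<tau>"
    and f_\<tau>: "\<forall>x\<in>verts (tensor K2 G). f (\<tau> x) = K2_swap (f x)"
  shows "\<forall>x\<in>verts (tensor K2 G). x \<in> {x \<in> verts (tensor K2 G). fst (f x) = 1}
    \<longleftrightarrow> \<tau> x \<notin> {x \<in> verts (tensor K2 G). fst (f x) = 1}"
proof
  fix x assume x: "x \<in> verts (tensor K2 G)"
  have "fst (f x) = 1 \<or> fst (f x) = 2"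
    using graph_iso_map_in_verts[OF f x] unfolding verts_tensor_K2 by auto
  then show "x \<in> {x \<in> verts (tensor K2 G). fst (f x) = 1}
      \<longleftrightarrow> \<tau> x \<notin> {x \<in> verts (tensor K2 G). fst (f x) = 1}"
    using graph_iso_map_in_verts[OF \<tau> x] f_\<tau> x unfolding K2_swap_def by auto
qed

lemma bij_betw_first_layer:
  assumes f: "graph_iso_map (tensor K2 G) (tensor K2 H) f"
  shows "bij_betw f {x \<in> verts (tensor K2 G). fst (f x) = 1} ({1} \<times> verts H)"
proof (rule bij_betw_subset[OF graph_iso_map_bij[OF f]])
  show "f ` {x \<in> verts (tensor K2 G). fst (f x) = 1} = {1} \<times> verts H"
  proof
    show "f ` {x \<in> verts (tensor K2 G). fst (f x) = 1} \<subseteq> {1} \<times> verts H"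
      using graph_iso_map_in_verts[OF f] unfolding verts_tensor_K2 by force
    show "{1} \<times> verts H \<subseteq> f ` {x \<in> verts (tensor K2 G). fst (f x) = 1}"
    proof
      fix y assume y: "y \<in> {1::nat} \<times> verts H"
      then obtain x where "x \<in> verts (tensor K2 G)" "y = f x"
        using bij_betw_imp_surj_on[OF graph_iso_map_bij[OF f]] unfolding verts_tensor_K2 by blast
      with y show "y \<in> f ` {x \<in> verts (tensor K2 G). fst (f x) = 1}"
        by force
    qed
  qed
qed blast

lemma ex_layer_bij_has_common_nbr_of_tensor_K2_iso:
  assumes "graph_iso (tensor K2 G) (tensor K2 H)"
  shows "\<exists>\<chi>. bij_betw \<chi> ({1} \<times> verts G) ({1} \<times> verts H) \<and>
    (\<forall>S\<subseteq>{1} \<times> verts G. has_common_nbr (tensor K2 H) (\<chi> ` S) \<longleftrightarrow> has_common_nbr (tensor K2 G) S)"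
proof -
  let ?X = "tensor K2 G" and ?Y = "tensor K2 H"
  obtain f where f: "graph_iso_map ?X ?Y f"
    using assms graph_iso_iff_ex_map by blast
  define \<tau> where "\<tau> = inv_into (verts ?X) f \<circ> K2_swap \<circ> f"
  note \<tau> = graph_iso_map_K2_swap_conjugate[OF f, folded \<tau>_def]
  let ?A = "{x \<in> verts ?X. fst (id x) = 1}" and ?B = "{x \<in> verts ?X. fst (f x) = 1}"
  have A: "?A = {1} \<times> verts G"
    by (auto simp: verts_tensor_K2)
  have "\<forall>x\<in>verts ?X. id (K2_swap x) = K2_swap (id x)"
    by simp
  from first_layer_swap[OF graph_iso_map_id graph_iso_map_K2_swap this]
  obtain \<phi> where \<phi>: "bij_betw \<phi> ?A ?B" "\<forall>S\<subseteq>?A. has_common_nbr ?X (\<phi> ` S) \<longleftrightarrow> has_common_nbr ?X S"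
    using ex_bij_has_common_nbr_of_involutions[OF graph_iso_map_K2_swap _ \<tau>(1,3) _
        common_nbr_rel_Image_first_layer[OF graph_iso_map_id] _ _
        common_nbr_rel_Image_first_layer[OF f] first_layer_swap[OF f \<tau>(1,2)]]
      K2_swap_K2_swap by blast
  have "bij_betw (f \<circ> \<phi>) ?A ({1} \<times> verts H)"
    using \<phi>(1) bij_betw_first_layer[OF f] by (rule bij_betw_trans)
  moreover have "has_common_nbr ?Y ((f \<circ> \<phi>) ` S) \<longleftrightarrow> has_common_nbr ?X S" if "S \<subseteq> ?A" for S
  proof -
    have "\<phi> ` S \<subseteq> verts ?X"
      using that bij_betw_imp_surj_on[OF \<phi>(1)] by blast
    then have "has_common_nbr ?Y (f ` \<phi> ` S) \<longleftrightarrow> has_common_nbr ?X (\<phi> ` S)"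
      by (rule graph_iso_map_has_common_nbr[OF f])
    then show ?thesis
      using \<phi>(2) that by (simp add: image_comp)
  qed
  ultimately show ?thesis
    unfolding A[symmetric] by blast
qed

lemma ex_nbhd_complex_iso_map_of_tensor_K2_iso:
  assumes "graph_iso (tensor K2 G) (tensor K2 H)"
  shows "\<exists>\<psi>. nbhd_complex_iso_map G H \<psi>"
proof -
  obtain \<chi> where \<chi>: "bij_betw \<chi> ({1} \<times> verts G) ({1} \<times> verts H)"
    "\<forall>S\<subseteq>{1} \<times> verts G. has_common_nbr (tensor K2 H) (\<chi> ` S) \<longleftrightarrow> has_common_nbr (tensor K2 G) S"
    using ex_layer_bij_has_common_nbr_of_tensor_K2_iso[OF assms] by blast
  define \<psi> where "\<psi> = snd \<circ> \<chi> \<circ> Pair (1::nat)"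
  have "bij_betw \<psi> (verts G) (verts H)"
  proof -
    have "bij_betw (Pair 1) (verts G) ({1::nat} \<times> verts G)"
      by (rule bij_betwI') auto
    moreover have "bij_betw snd ({1::nat} \<times> verts H) (verts H)"
      by (rule bij_betwI') auto
    ultimately show ?thesis
      unfolding \<psi>_def using \<chi>(1) by (metis bij_betw_trans)
  qed
  moreover have "has_common_nbr H (\<psi> ` S) \<longleftrightarrow> has_common_nbr G S" if S: "S \<subseteq> verts G" for S
  proof -
    have "\<chi> (1, v) = (1, \<psi> v)" if "v \<in> S" for v
    proof -
      have "\<chi> (1, v) \<in> {1} \<times> verts H"
        using bij_betw_apply[OF \<chi>(1)] S that by blast
      then show ?thesis
        unfolding \<psi>_def by (cases "\<chi> (1, v)") simp
    qed
    then have image: "\<chi> ` ({1} \<times> S) = {1} \<times> \<psi> ` S"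
      by force
    have "has_common_nbr H (\<psi> ` S) \<longleftrightarrow> has_common_nbr (tensor K2 H) (\<chi> ` ({1} \<times> S))"
      unfolding image has_common_nbr_tensor_K2 ..
    also have "\<dots> \<longleftrightarrow> has_common_nbr (tensor K2 G) ({1} \<times> S)"
      using S by (intro \<chi>(2)[rule_format]) blast
    also have "\<dots> \<longleftrightarrow> has_common_nbr G S"
      by (rule has_common_nbr_tensor_K2)
    finally show ?thesis .
  qed
  ultimately show ?thesis
    unfolding nbhd_complex_iso_map_def by blast
qed

section \<open>From neighbourhood complexes to tensor products\<close>

lemma nbhd_subset_verts: "is_graph G \<Longrightarrow> nbhd G v \<subseteq> verts G"
  unfolding is_graph_def nbhd_def by blast

lemma has_common_nbr_nbhd: "v \<in> verts G \<Longrightarrow> has_common_nbr G (nbhd G v)"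
  unfolding has_common_nbr_def by blast

lemma nbhd_complex_iso_map_image_nbhd:
  assumes G: "is_graph G" "locally_finite G" "stiff G" and H: "is_graph H" "locally_finite H"
    and \<phi>: "nbhd_complex_iso_map G H \<phi>" and v: "v \<in> verts G"
  shows "\<exists>w\<in>verts H. \<phi> ` nbhd G v = nbhd H w"
proof -
  let ?\<phi>' = "inv_into (verts G) \<phi>"
  have bij: "bij_betw \<phi> (verts G) (verts H)"
    using \<phi> unfolding nbhd_complex_iso_map_def by simp
  have cn: "has_common_nbr H (\<phi> ` S) \<longleftrightarrow> has_common_nbr G S" if "S \<subseteq> verts G" "finite S" for S
    using \<phi> that unfolding nbhd_complex_iso_map_def by simp
  have cn': "has_common_nbr G (?\<phi>' ` T) \<longleftrightarrow> has_common_nbr H T" if "T \<subseteq> verts H" "finite T" for T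
    using nbhd_complex_iso_map_inv[OF \<phi>] that unfolding nbhd_complex_iso_map_def by simp
  have "finite (nbhd G v)"
    using G(2) v unfolding locally_finite_def by simp
  then have "has_common_nbr H (\<phi> ` nbhd G v)"
    using cn nbhd_subset_verts[OF G(1)] has_common_nbr_nbhd[OF v] by simp
  then obtain w where w: "w \<in> verts H" "\<phi> ` nbhd G v \<subseteq> nbhd H w"
    unfolding has_common_nbr_def by blast
  have "finite (nbhd H w)"
    using H(2) w(1) unfolding locally_finite_def by simp
  then have "has_common_nbr G (?\<phi>' ` nbhd H w)"
    using cn' nbhd_subset_verts[OF H(1)] has_common_nbr_nbhd[OF w(1)] by simp
  then obtain v' where v': "v' \<in> verts G" "?\<phi>' ` nbhd H w \<subseteq> nbhd G v'"
    unfolding has_common_nbr_def by blast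
  have "nbhd G v = ?\<phi>' ` \<phi> ` nbhd G v"
    using bij_betw_imp_inj_on[OF bij] nbhd_subset_verts[OF G(1)] by simp
  also have "\<dots> \<subseteq> ?\<phi>' ` nbhd H w"
    using w(2) by (rule image_mono)
  finally have sub: "nbhd G v \<subseteq> ?\<phi>' ` nbhd H w" .
  then have "nbhd G v \<subseteq> nbhd G v'"
    using v'(2) by (rule subset_trans)
  then have "v = v'"
    using G(3) v v'(1) unfolding stiff_def by blast
  with sub v'(2) have "?\<phi>' ` nbhd H w = nbhd G v"
    by blast
  then have "\<phi> ` nbhd G v = \<phi> ` ?\<phi>' ` nbhd H w"
    by simp
  also have "\<dots> = nbhd H w"
    using bij nbhd_subset_verts[OF H(1)] by (simp add: bij_betw_def image_inv_into_cancel)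
  finally show ?thesis
    using w(1) by blast
qed

lemma edge_iff_nbhd_image:
  assumes G: "is_graph G" and H: "is_graph H" and \<phi>: "inj_on \<phi> (verts G)"
    and nbhd: "\<phi> ` nbhd G v = nbhd H w" and u: "u \<in> verts G"
  shows "(u, v) \<in> edges G \<longleftrightarrow> (\<phi> u, w) \<in> edges H"
proof -
  have "(u, v) \<in> edges G \<longleftrightarrow> u \<in> nbhd G v"
    using G unfolding is_graph_def nbhd_def sym_def by blast
  also have "\<dots> \<longleftrightarrow> \<phi> u \<in> \<phi> ` nbhd G v"
    using inj_on_image_mem_iff[OF \<phi> u nbhd_subset_verts[OF G]] by simp
  also have "\<dots> \<longleftrightarrow> (\<phi> u, w) \<in> edges H"
    unfolding nbhd using H unfolding is_graph_def nbhd_def sym_def by blast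
  finally show ?thesis .
qed

lemma graph_iso_tensor_K2_of_nbhd_images:
  assumes G: "is_graph G" and H: "is_graph H"
    and \<phi>: "bij_betw \<phi> (verts G) (verts H)" and \<psi>: "bij_betw \<psi> (verts G) (verts H)"
    and nbhd: "\<forall>v\<in>verts G. \<phi> ` nbhd G v = nbhd H (\<psi> v)"
  shows "graph_iso (tensor K2 G) (tensor K2 H)"
proof -
  define F where "F x = (if x \<in> {1} \<times> verts G then map_prod id \<phi> x else map_prod id \<psi> x)"
    for x :: "nat \<times> _"
  have "bij_betw F ({1} \<times> verts G \<union> {2} \<times> verts G) ({1} \<times> verts H \<union> {2} \<times> verts H)"
    unfolding F_def
    by (rule bij_betw_disjoint_Un) (auto intro: bij_betw_map_prod \<phi> \<psi> bij_betw_id)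
  moreover have "{1, 2} \<times> verts G = {1::nat} \<times> verts G \<union> {2} \<times> verts G"
    "{1, 2} \<times> verts H = {1::nat} \<times> verts H \<union> {2} \<times> verts H"
    by blast+
  ultimately have "bij_betw F (verts (tensor K2 G)) (verts (tensor K2 H))"
    unfolding verts_tensor_K2 by (simp only:)
  moreover have "(x, y) \<in> edges (tensor K2 G) \<longleftrightarrow> (F x, F y) \<in> edges (tensor K2 H)"
    if "x \<in> verts (tensor K2 G)" "y \<in> verts (tensor K2 G)" for x y
  proof -
    obtain i u j v where x: "x = (i, u)" and y: "y = (j, v)"
      by (cases x, cases y)
    have uv: "u \<in> verts G" "v \<in> verts G" and "i = 1 \<or> i = 2" "j = 1 \<or> j = 2"
      using that unfolding x y verts_tensor_K2 by auto
    moreover have "(u, v) \<in> edges G \<longleftrightarrow> (\<phi> u, \<psi> v) \<in> edges H"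
      using edge_iff_nbhd_image[OF G H bij_betw_imp_inj_on[OF \<phi>]] nbhd uv by blast
    moreover have "(u, v) \<in> edges G \<longleftrightarrow> (\<psi> u, \<phi> v) \<in> edges H"
      using edge_iff_nbhd_image[OF G H bij_betw_imp_inj_on[OF \<phi>]] nbhd uv G H
      unfolding is_graph_def sym_def by blast
    ultimately show ?thesis
      unfolding x y F_def by (elim disjE) (simp_all add: edge_tensor_K2_iff)
  qed
  ultimately show ?thesis
    unfolding graph_iso_def by blast
qed

lemma ex_bij_betw_nbhd_image:
  assumes G: "is_graph G" "stiff G" and H: "stiff H" and \<phi>: "inj_on \<phi> (verts G)"
    and into: "\<forall>v\<in>verts G. \<exists>w\<in>verts H. \<phi> ` nbhd G v = nbhd H w"
    and onto: "\<forall>w\<in>verts H. \<exists>v\<in>verts G. \<phi> ` nbhd G v = nbhd H w"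
  shows "\<exists>\<psi>. bij_betw \<psi> (verts G) (verts H) \<and> (\<forall>v\<in>verts G. \<phi> ` nbhd G v = nbhd H (\<psi> v))"
proof -
  from into obtain \<psi> where \<psi>: "\<forall>v\<in>verts G. \<psi> v \<in> verts H \<and> \<phi> ` nbhd G v = nbhd H (\<psi> v)"
    by (metis bchoice)
  have "inj_on \<psi> (verts G)"
  proof (rule inj_onI)
    fix v v' assume v: "v \<in> verts G" "v' \<in> verts G" and "\<psi> v = \<psi> v'"
    then have "\<phi> ` nbhd G v = \<phi> ` nbhd G v'"
      using \<psi> by simp
    then have "nbhd G v = nbhd G v'"
      using inj_on_image_eq_iff[OF \<phi> nbhd_subset_verts[OF G(1)] nbhd_subset_verts[OF G(1)]] by simp
    with G(2) v show "v = v'"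
      unfolding stiff_def by blast
  qed
  moreover have "\<psi> ` verts G = verts H"
  proof
    show "\<psi> ` verts G \<subseteq> verts H"
      using \<psi> by blast
    show "verts H \<subseteq> \<psi> ` verts G"
    proof
      fix w assume w: "w \<in> verts H"
      then obtain v where v: "v \<in> verts G" "\<phi> ` nbhd G v = nbhd H w"
        using onto by blast
      then have "nbhd H w = nbhd H (\<psi> v)"
        using \<psi> by simp
      with H w v(1) \<psi> have "w = \<psi> v"
        unfolding stiff_def by blast
      with v(1) show "w \<in> \<psi> ` verts G"
        by blast
    qed
  qed
  ultimately show ?thesis
    using \<psi> unfolding bij_betw_def by blast
qed

lemma graph_iso_tensor_K2_of_nbhd_complex_iso_map:
  assumes G: "is_graph G" "locally_finite G" "stiff G"
    and H: "is_graph H" "locally_finite H" "stiff H"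
    and \<phi>: "nbhd_complex_iso_map G H \<phi>"
  shows "graph_iso (tensor K2 G) (tensor K2 H)"
proof -
  have bij: "bij_betw \<phi> (verts G) (verts H)"
    using \<phi> unfolding nbhd_complex_iso_map_def by blast
  have "\<exists>v\<in>verts G. \<phi> ` nbhd G v = nbhd H w" if w: "w \<in> verts H" for w
  proof -
    obtain v where v: "v \<in> verts G" "inv_into (verts G) \<phi> ` nbhd H w = nbhd G v"
      using nbhd_complex_iso_map_image_nbhd[OF H G(1,2) nbhd_complex_iso_map_inv[OF \<phi>] w] by blast
    have "\<phi> ` nbhd G v = nbhd H w"
      unfolding v(2)[symmetric]
      using bij nbhd_subset_verts[OF H(1)] by (simp add: bij_betw_def image_inv_into_cancel)
    with v(1) show ?thesis
      by blast
  qed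
  then obtain \<psi> where "bij_betw \<psi> (verts G) (verts H)" "\<forall>v\<in>verts G. \<phi> ` nbhd G v = nbhd H (\<psi> v)"
    using ex_bij_betw_nbhd_image[OF G(1,3) H(3) bij_betw_imp_inj_on[OF bij]]
      nbhd_complex_iso_map_image_nbhd[OF G H(1,2) \<phi>] by blast
  then show ?thesis
    using graph_iso_tensor_K2_of_nbhd_images[OF G(1) H(1) bij] by blast
qed

theorem theorem1p1:
  fixes G :: "'a graph" and H :: "'b graph"
  assumes "is_graph G" and "is_graph H"
    and "no_isolated G" and "no_isolated H"
  shows "(graph_iso (tensor K2 G) (tensor K2 H) \<longrightarrow>
            complex_iso (nbhd_complex G) (nbhd_complex H))
       \<and> (locally_finite G \<and> locally_finite H \<and> stiff G \<and> stiff H \<longrightarrow>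
            complex_iso (nbhd_complex G) (nbhd_complex H) \<longrightarrow>
            graph_iso (tensor K2 G) (tensor K2 H))"
  unfolding complex_iso_nbhd_complex_iff[OF assms(3,4)]
  using ex_nbhd_complex_iso_map_of_tensor_K2_iso
    graph_iso_tensor_K2_of_nbhd_complex_iso_map[OF assms(1) _ _ assms(2)]
  by blast

end
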